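(* Let $n\ge0$, $\alpha\ge1$ be integers, $N=2^{n+1}$, $c=2^\alpha+1$, and consider the $c$-DAG over the uniform dataset $\{0,\dots,N-1\}$ (described in the context). Let $s$ be a real number with $1<s\le N$, $\kappa=\lfloor\log_2(N/s)\rfloor$ (so $2^{n-\kappa}<s\le2^{n-\kappa+1}$), $u=2^{n-\kappa+1}/(c-1)$, and let $Q=[x,x+s)$ with $x\in[0,N-s]$. Then $\mathrm{level}_{c\text{-DAG}}(Q)\in\{\kappa-1,\kappa\}$. More precisely, $\mathrm{level}_{c\text{-DAG}}(Q)=\kappa$ if $Q$ is contained in a level-$\kappa$ node, i.e. if \[ x\in\bigcup_{m=0}^{(c-1)2^{\kappa}-(c-1)}\bigl[mu,\ (m+c-1)u-s\bigr]; \] otherwise $\mathrm{level}_{c\text{-DAG}}(Q)=\kappa-1$, and this is the case exactly for \[ x\in\bigcup_{m=0}^{(c-1)2^{\kappa}-c}\bigl((m+c-1)u-s,\ (m+1)u\bigr). \]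
   Context: The $c$-DAG over $\mathcal{D}=\{0,\dots,N-1\}\subset[0,N)$ has levels $\ell=0,\dots,n+1$; with $u_\ell=2^{n-\ell+1}/(c-1)$, its level-$\ell$ nodes are the $(c-1)2^\ell-(c-2)$ intervals $[mu_\ell,\,mu_\ell+2^{n-\ell+1})$, $m=0,1,\dots,(c-1)2^\ell-(c-1)$ (a node $[a,a+L)$ has the $c$ children $[a+jL/(2(c-1)),\,a+jL/(2(c-1))+L/2)$, $j=0,\dots,c-1$). SRC-search returns a node of the deepest level whose interval contains $Q$; $\mathrm{level}_{c\text{-DAG}}(Q)$ is the largest $\ell$ such that some level-$\ell$ node contains $Q$. *)

theory Defs
  imports Complex_Main
begin

text \<open>The c-DAG over the dataset {0,...,N-1}, N = 2^(n+1), viewed as half-open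
real intervals.\<close>

definition cdag_unit :: "nat \<Rightarrow> nat \<Rightarrow> nat \<Rightarrow> real" where
  "cdag_unit n c l = 2 ^ (n + 1 - l) / (real c - 1)"

definition cdag_node :: "nat \<Rightarrow> nat \<Rightarrow> nat \<Rightarrow> nat \<Rightarrow> real set" where
  "cdag_node n c l m =
     {real m * cdag_unit n c l ..< real m * cdag_unit n c l + 2 ^ (n + 1 - l)}"

definition cdag_nodes :: "nat \<Rightarrow> nat \<Rightarrow> nat \<Rightarrow> real set set" where
  "cdag_nodes n c l =
     (if l \<le> n + 1 then {cdag_node n c l m | m. m \<le> (c - 1) * 2 ^ l - (c - 1)} else {})"

definition cdag_level :: "nat \<Rightarrow> nat \<Rightarrow> real set \<Rightarrow> nat" where
  "cdag_level n c Q = (GREATEST l. l \<le> n + 1 \<and> (\<exists>I\<in>cdag_nodes n c l. Q \<subseteq> I))"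

end

theory Submission
  imports Defs
begin

text \<open>A level-l node has length L = 2^(n+1-l), and consecutive level-l nodes are shifted
by u = L/(c-1). Since 2^(n-\<kappa>) < s \<le> 2^(n-\<kappa>+1), no node of level greater than \<kappa> is long
enough to contain Q, whereas the level-(\<kappa>-1) nodes have length 2L, which for c \<ge> 3 is at
least their shift plus s, so the last of them starting at or before x contains Q. At level \<kappa>
that node [mu, (m+c-1)u) contains Q unless x + s overshoots its end, i.e. unless x lies in
the gap ((m+c-1)u - s, (m+1)u) before the next node starts.\<close>

lemma ex_nat_iff_ex_nonneg_int: "(\<exists>m::nat. P (int m)) \<longleftrightarrow> (\<exists>m::int. 0 \<le> m \<and> P m)"
  by (metis nonneg_int_cases of_nat_0_le_iff)

lemma interval_in_window:
  fixes u s x :: real and M d :: int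
  assumes "0 < u" "0 \<le> M" "u + s \<le> of_int d * u" "0 \<le> x" "x \<le> of_int (M + d) * u - s"
  shows "\<exists>m. 0 \<le> m \<and> m \<le> M \<and> of_int m * u \<le> x \<and> x \<le> of_int (m + d) * u - s"
proof -
  define f where "f = \<lfloor>x / u\<rfloor>"
  have f_lower: "of_int f * u \<le> x" and f_upper: "x < of_int (f + 1) * u" and "0 \<le> f"
    using floor_divide_lower[OF \<open>0 < u\<close>, of x] floor_divide_upper[OF \<open>0 < u\<close>, of x] assms
    by (simp_all add: f_def)
  show ?thesis
  proof (cases "M \<le> f")
    case True
    then have "of_int M * u \<le> of_int f * u" using \<open>0 < u\<close> by simp
    also note f_lower
    finally show ?thesis using assms by blast
  next
    case False
    have "x \<le> of_int (f + d) * u - s"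
      using f_upper assms(3) by (simp add: algebra_simps)
    then show ?thesis using False f_lower \<open>0 \<le> f\<close> by (intro exI[of _ f]) simp
  qed
qed

lemma not_in_window_iff_in_gap:
  fixes u s x :: real and M d :: int
  assumes "0 < u" "0 \<le> M" "0 \<le> x" "x \<le> of_int (M + d) * u - s"
  shows "\<not> (\<exists>m. 0 \<le> m \<and> m \<le> M \<and> of_int m * u \<le> x \<and> x \<le> of_int (m + d) * u - s) \<longleftrightarrow>
    (\<exists>m. 0 \<le> m \<and> m \<le> M - 1 \<and> of_int (m + d) * u - s < x \<and> x < of_int (m + 1) * u)"
proof
  assume no_window: "\<not> (\<exists>m. 0 \<le> m \<and> m \<le> M \<and> of_int m * u \<le> x \<and> x \<le> of_int (m + d) * u - s)"
  define f where "f = \<lfloor>x / u\<rfloor>"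
  have f_lower: "of_int f * u \<le> x" and f_upper: "x < of_int (f + 1) * u" and "0 \<le> f"
    using floor_divide_lower[OF \<open>0 < u\<close>, of x] floor_divide_upper[OF \<open>0 < u\<close>, of x] assms
    by (simp_all add: f_def)
  have "f < M"
  proof (rule ccontr)
    assume "\<not> f < M"
    then have "of_int M * u \<le> of_int f * u" using \<open>0 < u\<close> by simp
    also note f_lower
    finally show False using no_window assms by blast
  qed
  then show "\<exists>m. 0 \<le> m \<and> m \<le> M - 1 \<and> of_int (m + d) * u - s < x \<and> x < of_int (m + 1) * u"
    using no_window f_lower f_upper \<open>0 \<le> f\<close> by (intro exI[of _ f]) force
next
  assume "\<exists>m. 0 \<le> m \<and> m \<le> M - 1 \<and> of_int (m + d) * u - s < x \<and> x < of_int (m + 1) * u"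
  then obtain m where gap: "of_int (m + d) * u - s < x" "x < of_int (m + 1) * u" by blast
  show "\<not> (\<exists>m. 0 \<le> m \<and> m \<le> M \<and> of_int m * u \<le> x \<and> x \<le> of_int (m + d) * u - s)"
  proof
    assume "\<exists>m'. 0 \<le> m' \<and> m' \<le> M \<and> of_int m' * u \<le> x \<and> x \<le> of_int (m' + d) * u - s"
    then obtain m' where window: "of_int m' * u \<le> x" "x \<le> of_int (m' + d) * u - s" by blast
    show False
    proof (cases "m' \<le> m")
      case True
      then have "of_int (m' + d) * u \<le> of_int (m + d) * u" using \<open>0 < u\<close> by simp
      then show False using gap window by linarith
    next
      case False
      then have "of_int (m + 1) * u \<le> of_int m' * u" using \<open>0 < u\<close> by simp
      then show False using gap window by linarith
    qed
  qed
qed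

lemma floor_log2_pow_div:
  fixes s :: real
  assumes "1 < s" "s \<le> 2 ^ (n + 1)"
  obtains k :: nat where "\<lfloor>log 2 (2 ^ (n + 1) / s)\<rfloor> = int k" "k \<le> n"
    "2 ^ (n - k) < s" "s \<le> 2 ^ (n + 1 - k)"
proof -
  define r where "r = 2 ^ (n + 1) / s"
  define k where "k = nat \<lfloor>log 2 r\<rfloor>"
  have "1 \<le> r" using assms by (simp add: r_def)
  then have floor_k: "\<lfloor>log 2 r\<rfloor> = int k" by (simp add: k_def)
  have "0 < r" using \<open>1 \<le> r\<close> by simp
  from floor_log_eq_powr_iff[OF this, of 2 "int k"] floor_k
  have "2 powr of_int (int k) \<le> r \<and> r < 2 powr of_int (int k + 1)" by simp
  then have "2 ^ k \<le> r \<and> r < 2 ^ (k + 1)"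
    by (simp add: powr_add powr_realpow)
  then have lower: "2 ^ k * s \<le> 2 ^ (n + 1)" and upper: "2 ^ (n + 1) < 2 ^ (k + 1) * s"
    using assms(1) by (simp_all add: r_def pos_le_divide_eq divide_less_eq)
  have "(2::real) ^ k < 2 ^ k * s" using assms(1) by simp
  then have "(2::real) ^ k < 2 ^ (n + 1)" using lower by linarith
  then have "k \<le> n" using power_strict_increasing_iff[of "2::real" k "n + 1"] by simp
  have "(2::real) ^ (n + 1) = 2 ^ k * 2 ^ (n + 1 - k)" using \<open>k \<le> n\<close> by (simp flip: power_add)
  then have s_le: "s \<le> 2 ^ (n + 1 - k)" using lower by simp
  have "(2::real) ^ (n + 1) = 2 ^ (k + 1) * 2 ^ (n - k)" using \<open>k \<le> n\<close> by (simp flip: power_add)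
  then have s_gt: "2 ^ (n - k) < s" using upper by simp
  show ?thesis using that floor_k \<open>k \<le> n\<close> s_le s_gt by (simp add: r_def)
qed

abbreviation cdag_covers :: "nat \<Rightarrow> nat \<Rightarrow> nat \<Rightarrow> real set \<Rightarrow> bool" where
  "cdag_covers n c l Q \<equiv> \<exists>I\<in>cdag_nodes n c l. Q \<subseteq> I"

lemma cdag_unit_mult:
  assumes "c \<noteq> 1"
  shows "(real c - 1) * cdag_unit n c l = 2 ^ (n + 1 - l)"
  using assms by (simp add: cdag_unit_def)

lemma cdag_unit_pos:
  assumes "2 \<le> c"
  shows "0 < cdag_unit n c l"
  using assms by (simp add: cdag_unit_def)

lemma cdag_unit_le_half:
  assumes "3 \<le> c"
  shows "2 * cdag_unit n c l \<le> 2 ^ (n + 1 - l)"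
proof -
  have "2 * cdag_unit n c l \<le> (real c - 1) * cdag_unit n c l"
    using assms cdag_unit_pos[of c n l] by (intro mult_right_mono) auto
  then show ?thesis using assms cdag_unit_mult[of c n l] by simp
qed

lemma cdag_last_node_end:
  assumes "2 \<le> c" "l \<le> n + 1"
  shows "of_int ((int c - 1) * 2 ^ l - (int c - 1) + (int c - 1)) * cdag_unit n c l = 2 ^ (n + 1)"
proof -
  have "of_int ((int c - 1) * 2 ^ l - (int c - 1) + (int c - 1)) * cdag_unit n c l
      = 2 ^ l * ((real c - 1) * cdag_unit n c l)"
    by simp
  also have "\<dots> = 2 ^ (l + (n + 1 - l))"
    using assms(1) by (simp add: cdag_unit_mult power_add)
  finally show ?thesis using assms(2) by simp
qed

lemma cdag_covers_iff:
  assumes "2 \<le> c" "l \<le> n + 1" "0 < s"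
  shows "cdag_covers n c l {x..<x + s} \<longleftrightarrow>
    (\<exists>m::int. 0 \<le> m \<and> m \<le> (int c - 1) * 2 ^ l - (int c - 1) \<and>
       of_int m * cdag_unit n c l \<le> x \<and> x \<le> of_int (m + (int c - 1)) * cdag_unit n c l - s)"
    (is "_ \<longleftrightarrow> ?window")
proof -
  define u where "u = cdag_unit n c l"
  have node_end: "of_int m * u + 2 ^ (n + 1 - l) = of_int (m + (int c - 1)) * u" for m :: int
    using assms(1) cdag_unit_mult[of c n l] by (simp add: u_def algebra_simps)
  have last_index: "int ((c - 1) * 2 ^ l - (c - 1)) = (int c - 1) * 2 ^ l - (int c - 1)"
    using assms(1) by (subst of_nat_diff) (simp_all add: of_nat_diff)
  have "cdag_covers n c l {x..<x + s} \<longleftrightarrow>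
      (\<exists>m::nat. int m \<le> int ((c - 1) * 2 ^ l - (c - 1)) \<and>
         of_int (int m) * u \<le> x \<and> x \<le> of_int (int m) * u + 2 ^ (n + 1 - l) - s)"
    using assms by (auto simp: cdag_nodes_def cdag_node_def u_def)
  also have "\<dots> \<longleftrightarrow> ?window"
    unfolding u_def[symmetric] last_index node_end by (rule ex_nat_iff_ex_nonneg_int)
  finally show ?thesis .
qed

lemma cdag_not_covers_iff_gap:
  assumes "2 \<le> c" "l \<le> n + 1" "0 < s" "0 \<le> x" "x + s \<le> 2 ^ (n + 1)"
  shows "\<not> cdag_covers n c l {x..<x + s} \<longleftrightarrow>
    (\<exists>m::int. 0 \<le> m \<and> m \<le> (int c - 1) * 2 ^ l - int c \<and>
       of_int (m + (int c - 1)) * cdag_unit n c l - s < x \<and> x < of_int (m + 1) * cdag_unit n c l)"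
proof -
  let ?u = "cdag_unit n c l" and ?d = "int c - 1" and ?M = "(int c - 1) * 2 ^ l - (int c - 1)"
  have "x \<le> of_int (?M + ?d) * ?u - s"
    using assms cdag_last_node_end[of c l n] by simp
  moreover have "?M - 1 = (int c - 1) * 2 ^ l - int c" by simp
  ultimately show ?thesis
    using not_in_window_iff_in_gap[where u = ?u and M = ?M and d = ?d] assms cdag_unit_pos[of c n l]
    by (simp add: cdag_covers_iff)
qed

lemma cdag_covers_length_le:
  assumes "cdag_covers n c l {x..<x + s}" "0 < s"
  shows "s \<le> 2 ^ (n + 1 - l)"
  using assms by (auto simp: cdag_nodes_def cdag_node_def split: if_splits)

lemma cdag_covers_root:
  assumes "0 < s" "0 \<le> x" "x + s \<le> 2 ^ (n + 1)"
  shows "cdag_covers n c 0 {x..<x + s}"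
proof -
  have "cdag_node n c 0 0 \<in> cdag_nodes n c 0" by (auto simp: cdag_nodes_def)
  moreover have "{x..<x + s} \<subseteq> cdag_node n c 0 0" using assms by (simp add: cdag_node_def)
  ultimately show ?thesis by blast
qed

lemma cdag_covers_short_interval:
  assumes "3 \<le> c" "l \<le> n + 1" "0 < s" "2 * s \<le> 2 ^ (n + 1 - l)" "0 \<le> x" "x + s \<le> 2 ^ (n + 1)"
  shows "cdag_covers n c l {x..<x + s}"
proof -
  let ?u = "cdag_unit n c l" and ?d = "int c - 1" and ?M = "(int c - 1) * 2 ^ l - (int c - 1)"
  have "?u + s \<le> of_int ?d * ?u"
    using assms(1,4) cdag_unit_le_half[of c n l] cdag_unit_mult[of c n l] by simp
  moreover have "x \<le> of_int (?M + ?d) * ?u - s"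
    using assms cdag_last_node_end[of c l n] by simp
  ultimately show ?thesis
    using interval_in_window[of ?u ?M s ?d x] assms cdag_unit_pos[of c n l]
    by (simp add: cdag_covers_iff)
qed

lemma cdag_level_eqI:
  assumes "l \<le> n + 1" "cdag_covers n c l Q" "\<And>l'. l < l' \<Longrightarrow> \<not> cdag_covers n c l' Q"
  shows "cdag_level n c Q = l"
  unfolding cdag_level_def using assms by (intro Greatest_equality) (auto simp: not_less[symmetric])

lemma cdag_level_interval:
  assumes "3 \<le> c" "k \<le> n" "2 ^ (n - k) < s" "s \<le> 2 ^ (n + 1 - k)" "0 \<le> x" "x + s \<le> 2 ^ (n + 1)"
  shows "int (cdag_level n c {x..<x + s}) = (if cdag_covers n c k {x..<x + s} then int k else int k - 1)"
proof -
  have "0 < s" using assms(3) by (meson less_trans zero_less_numeral zero_less_power)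
  have too_short: "\<not> cdag_covers n c l {x..<x + s}" if "k < l" for l
  proof
    assume "cdag_covers n c l {x..<x + s}"
    then have "s \<le> 2 ^ (n + 1 - l)" using \<open>0 < s\<close> by (rule cdag_covers_length_le)
    also have "\<dots> \<le> 2 ^ (n - k)" using that by (intro power_increasing) auto
    finally show False using assms(3) by simp
  qed
  show ?thesis
  proof (cases "cdag_covers n c k {x..<x + s}")
    case True
    with assms(2) too_short show ?thesis by (simp add: cdag_level_eqI)
  next
    case False
    then have "0 < k" using cdag_covers_root[OF \<open>0 < s\<close> assms(5,6)] by (cases k) auto
    then have "n + 1 - (k - 1) = Suc (n + 1 - k)" using assms(2) by simp
    then have "2 * s \<le> 2 ^ (n + 1 - (k - 1))" using assms(4) by simp
    then have "cdag_covers n c (k - 1) {x..<x + s}"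
      using assms \<open>0 < s\<close> by (intro cdag_covers_short_interval) auto
    moreover have "\<not> cdag_covers n c l {x..<x + s}" if "k - 1 < l" for l
      using too_short[of l] False that by (cases "l = k") auto
    ultimately have "cdag_level n c {x..<x + s} = k - 1"
      using assms(2) by (intro cdag_level_eqI) auto
    with False \<open>0 < k\<close> show ?thesis by simp
  qed
qed

theorem lemma1:
  fixes n \<alpha> N c :: nat and s x u :: real and \<kappa> :: int
  assumes "\<alpha> \<ge> 1"
    and "N = 2 ^ (n + 1)"
    and "c = 2 ^ \<alpha> + 1"
    and "1 < s" and "s \<le> real N"
    and "\<kappa> = \<lfloor>log 2 (real N / s)\<rfloor>"
    and "u = 2 powr (real_of_int (int n - \<kappa> + 1)) / (real c - 1)"
    and "0 \<le> x" and "x \<le> real N - s"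
  shows "int (cdag_level n c {x..<x + s}) \<in> {\<kappa> - 1, \<kappa>} \<and>
         (int (cdag_level n c {x..<x + s}) = \<kappa> \<longleftrightarrow>
           (\<exists>I\<in>cdag_nodes n c (nat \<kappa>). {x..<x + s} \<subseteq> I)) \<and>
         (int (cdag_level n c {x..<x + s}) = \<kappa> \<longleftrightarrow>
           (\<exists>m::int. 0 \<le> m \<and> m \<le> (int c - 1) * 2 ^ nat \<kappa> - (int c - 1) \<and>
              real_of_int m * u \<le> x \<and> x \<le> real_of_int (m + int c - 1) * u - s)) \<and>
         (int (cdag_level n c {x..<x + s}) = \<kappa> - 1 \<longleftrightarrow>
           (\<exists>m::int. 0 \<le> m \<and> m \<le> (int c - 1) * 2 ^ nat \<kappa> - int c \<and>
              real_of_int (m + int c - 1) * u - s < x \<and> x < real_of_int (m + 1) * u))"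
proof -
  have "3 \<le> c" using assms(1,3) by (simp add: Suc_le_eq[symmetric] self_le_power)
  have N: "real N = 2 ^ (n + 1)" using assms(2) by simp
  obtain k where \<kappa>: "\<kappa> = int k" and "k \<le> n" and s_bounds: "2 ^ (n - k) < s" "s \<le> 2 ^ (n + 1 - k)"
    using floor_log2_pow_div[of s n] assms(4-6) N by auto
  have "0 < s" using assms(4) by simp
  have x_end: "x + s \<le> 2 ^ (n + 1)" using assms(9) N by simp
  have "real_of_int (int n - \<kappa> + 1) = real (n + 1 - k)" using \<kappa> \<open>k \<le> n\<close> by simp
  then have u: "u = cdag_unit n c k" using assms(7) by (simp add: cdag_unit_def powr_realpow)
  have level: "int (cdag_level n c {x..<x + s}) =
      (if cdag_covers n c k {x..<x + s} then int k else int k - 1)"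
    using cdag_level_interval \<open>3 \<le> c\<close> \<open>k \<le> n\<close> s_bounds assms(8) x_end by blast
  have "cdag_covers n c k {x..<x + s} \<longleftrightarrow>
      (\<exists>m::int. 0 \<le> m \<and> m \<le> (int c - 1) * 2 ^ k - (int c - 1) \<and>
         of_int m * u \<le> x \<and> x \<le> of_int (m + (int c - 1)) * u - s)"
    unfolding u using \<open>3 \<le> c\<close> \<open>k \<le> n\<close> \<open>0 < s\<close> by (intro cdag_covers_iff) auto
  moreover have "\<not> cdag_covers n c k {x..<x + s} \<longleftrightarrow>
      (\<exists>m::int. 0 \<le> m \<and> m \<le> (int c - 1) * 2 ^ k - int c \<and>
         of_int (m + (int c - 1)) * u - s < x \<and> x < of_int (m + 1) * u)"
    unfolding u using \<open>3 \<le> c\<close> \<open>k \<le> n\<close> \<open>0 < s\<close> assms(8) x_end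
    by (intro cdag_not_covers_iff_gap) auto
  ultimately show ?thesis
    using level \<kappa> by (simp only: add_diff_eq nat_int) auto
qed

end
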